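(* Let $G$ be a graph, $H$ a non-null subgraph of $G$, and let $n_0$ denote the maximum number of vertices in a connected component of $H$. For every independent set $I\subseteq V(G)\setminus V(H)$ of $G$ and every non-negative integer $k$ with $k\leq\alpha(H)-i(H-N(I))$, there exists an independent set $I_1\subseteq I$ with $|I_1|\leq kn_0$ such that $k\leq\alpha(H)-i(H-N(I_1))$.
   Context: All graphs are finite and simple; the null graph is allowed. For a graph $F$, $\alpha(F)$ is the maximum size of an independent set and $i(F)$ the minimum size of an inclusion-maximal independent set (both $0$ for the null graph). $N(I)=\bigcup_{v\in I}N_G(v)$ is the set of neighbors in $G$ of vertices of $I$, and $H-N(I)$ denotes the graph obtained from $H$ by deleting the vertices of $N(I)\cap V(H)$. *)

theory Defs
  imports Main
begin

definition graph :: "'a set \<Rightarrow> ('a \<Rightarrow> 'a \<Rightarrow> bool) \<Rightarrow> bool" where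
  "graph V E \<longleftrightarrow> finite V \<and> (\<forall>x y. E x y \<longrightarrow> x \<in> V \<and> y \<in> V)
     \<and> (\<forall>x y. E x y \<longrightarrow> E y x) \<and> (\<forall>x. \<not> E x x)"

definition subgraph :: "'a set \<Rightarrow> ('a \<Rightarrow> 'a \<Rightarrow> bool) \<Rightarrow> 'a set \<Rightarrow> ('a \<Rightarrow> 'a \<Rightarrow> bool) \<Rightarrow> bool" where
  "subgraph VH EH V E \<longleftrightarrow> graph VH EH \<and> VH \<subseteq> V \<and> (\<forall>x y. EH x y \<longrightarrow> E x y)"

definition indep :: "'a set \<Rightarrow> ('a \<Rightarrow> 'a \<Rightarrow> bool) \<Rightarrow> 'a set \<Rightarrow> bool" where
  "indep V E S \<longleftrightarrow> S \<subseteq> V \<and> (\<forall>x\<in>S. \<forall>y\<in>S. \<not> E x y)"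

definition maximal_indep :: "'a set \<Rightarrow> ('a \<Rightarrow> 'a \<Rightarrow> bool) \<Rightarrow> 'a set \<Rightarrow> bool" where
  "maximal_indep V E S \<longleftrightarrow> indep V E S \<and> (\<forall>T. indep V E T \<and> S \<subseteq> T \<longrightarrow> T = S)"

definition alpha :: "'a set \<Rightarrow> ('a \<Rightarrow> 'a \<Rightarrow> bool) \<Rightarrow> nat" where
  "alpha V E = Max (card ` {S. indep V E S})"

definition indep_dom :: "'a set \<Rightarrow> ('a \<Rightarrow> 'a \<Rightarrow> bool) \<Rightarrow> nat" where
  "indep_dom V E = Min (card ` {S. maximal_indep V E S})"

definition nbhd :: "('a \<Rightarrow> 'a \<Rightarrow> bool) \<Rightarrow> 'a set \<Rightarrow> 'a set" where
  "nbhd E I = {y. \<exists>x\<in>I. E x y}"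

definition del_verts_V :: "'a set \<Rightarrow> 'a set \<Rightarrow> 'a set" where
  "del_verts_V VH X = VH - X"

definition del_verts_E :: "('a \<Rightarrow> 'a \<Rightarrow> bool) \<Rightarrow> 'a set \<Rightarrow> 'a \<Rightarrow> 'a \<Rightarrow> bool" where
  "del_verts_E EH X = (\<lambda>x y. EH x y \<and> x \<notin> X \<and> y \<notin> X)"

definition component :: "'a set \<Rightarrow> ('a \<Rightarrow> 'a \<Rightarrow> bool) \<Rightarrow> 'a \<Rightarrow> 'a set" where
  "component V E v = {u \<in> V. E\<^sup>*\<^sup>* v u}"

definition max_comp_size :: "'a set \<Rightarrow> ('a \<Rightarrow> 'a \<Rightarrow> bool) \<Rightarrow> nat" where
  "max_comp_size V E = Max ((\<lambda>v. card (component V E v)) ` V)"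

end

theory Submission
  imports Defs
begin

text \<open>Fix a maximum independent set S of H and a minimum maximal independent set J of
H - N(I). Greedily collecting components of H on which S has more vertices than J gives a
union W of at most k components with |S \<inter> W| \<ge> |J \<inter> W| + k. One neighbour in I for each
vertex of W \<inter> N(I) gives I1 with |I1| \<le> |W| \<le> k n0. Extend J \<inter> W to a maximal independent
set T of H - N(I1); T agrees with J inside W, and replacing T \<inter> W by S \<inter> W yields an
independent set of H, so |T| \<le> \<alpha>(H) - |S \<inter> W| + |J \<inter> W| \<le> \<alpha>(H) - k.\<close>

lemma finite_indep_sets: "finite V \<Longrightarrow> finite {S. indep V E S}"
  by (rule finite_subset[of _ "Pow V"]) (auto simp: indep_def)

lemma finite_maximal_indep_sets: "finite V \<Longrightarrow> finite {S. maximal_indep V E S}"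
  by (rule finite_subset[OF _ finite_indep_sets]) (auto simp: maximal_indep_def)

lemma maximal_indep_extend:
  assumes "finite V" "indep V E S"
  shows "\<exists>T. maximal_indep V E T \<and> S \<subseteq> T"
proof -
  let ?A = "{T. indep V E T \<and> S \<subseteq> T}"
  have fin: "finite ?A"
    by (rule finite_subset[OF _ finite_indep_sets[OF assms(1)]]) auto
  obtain T where T: "T \<in> ?A" "card T = Max (card ` ?A)"
    using Max_in[of "card ` ?A"] fin assms(2) by fastforce
  have "T' = T" if "indep V E T'" "T \<subseteq> T'" for T'
  proof -
    have "T' \<in> ?A" using that T(1) by auto
    then have "card T' \<le> card T" using T(2) fin by simp
    moreover have "finite T'"
      using that(1) assms(1) finite_subset unfolding indep_def by blast
    ultimately show ?thesis using that(2) card_seteq by blast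
  qed
  then show ?thesis using T by (auto simp: maximal_indep_def)
qed

lemma maximal_indep_imp_indep: "maximal_indep V E S \<Longrightarrow> indep V E S"
  by (simp add: maximal_indep_def)

lemma maximal_indep_dominates:
  assumes "maximal_indep V E S" "v \<in> V" "v \<notin> S" "\<not> E v v"
  shows "\<exists>s\<in>S. E v s \<or> E s v"
proof (rule ccontr)
  assume "\<not> ?thesis"
  with assms have "indep V E (insert v S)"
    using maximal_indep_imp_indep[OF assms(1)] by (auto simp: indep_def)
  then show False using assms unfolding maximal_indep_def by blast
qed

lemma card_le_alpha: "finite V \<Longrightarrow> indep V E S \<Longrightarrow> card S \<le> alpha V E"
  unfolding alpha_def using finite_indep_sets by (intro Max_ge) auto

lemma alpha_attained: "finite V \<Longrightarrow> \<exists>S. indep V E S \<and> card S = alpha V E"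
  unfolding alpha_def using finite_indep_sets Max_in[of "card ` {S. indep V E S}"]
  by (fastforce simp: indep_def)

lemma indep_dom_le_card: "finite V \<Longrightarrow> maximal_indep V E S \<Longrightarrow> indep_dom V E \<le> card S"
  unfolding indep_dom_def using finite_maximal_indep_sets by (intro Min_le) auto

lemma indep_dom_attained:
  assumes "finite V"
  shows "\<exists>S. maximal_indep V E S \<and> card S = indep_dom V E"
proof -
  have "{S. maximal_indep V E S} \<noteq> {}"
    using maximal_indep_extend[OF assms, of E "{}"] by (auto simp: indep_def)
  then show ?thesis
    unfolding indep_dom_def using finite_maximal_indep_sets[OF assms]
      Min_in[of "card ` {S. maximal_indep V E S}"] by fastforce
qed

text \<open>For a symmetric adjacency relation these are exactly the unions of components.\<close>

definition edge_closed :: "'a set \<Rightarrow> ('a \<Rightarrow> 'a \<Rightarrow> bool) \<Rightarrow> 'a set \<Rightarrow> bool" where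
  "edge_closed V E W \<longleftrightarrow> W \<subseteq> V \<and> (\<forall>x y. E x y \<longrightarrow> x \<in> W \<longrightarrow> y \<in> W)"

lemma edge_closed_empty: "edge_closed V E {}"
  by (simp add: edge_closed_def)

lemma edge_closed_Un: "edge_closed V E X \<Longrightarrow> edge_closed V E Y \<Longrightarrow> edge_closed V E (X \<union> Y)"
  by (auto simp: edge_closed_def)

lemma edge_closed_Diff:
  "graph V E \<Longrightarrow> edge_closed V E X \<Longrightarrow> edge_closed V E Y \<Longrightarrow> edge_closed V E (X - Y)"
  unfolding edge_closed_def graph_def by blast

lemma edge_closed_compl: "graph V E \<Longrightarrow> edge_closed V E X \<Longrightarrow> edge_closed V E (V - X)"
  unfolding edge_closed_def graph_def by blast

lemma component_edge_closed: "graph V E \<Longrightarrow> edge_closed V E (component V E v)"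
  unfolding edge_closed_def component_def graph_def
  by (auto intro: rtranclp.rtrancl_into_rtrancl)

lemma component_subset_edge_closed:
  assumes "edge_closed V E X" "v \<in> X"
  shows "component V E v \<subseteq> X"
proof
  fix u assume "u \<in> component V E v"
  then have "E\<^sup>*\<^sup>* v u" by (simp add: component_def)
  then show "u \<in> X"
    by (induction rule: rtranclp_induct) (use assms in \<open>auto simp: edge_closed_def\<close>)
qed

lemma card_component_le_max_comp_size:
  "graph V E \<Longrightarrow> v \<in> V \<Longrightarrow> card (component V E v) \<le> max_comp_size V E"
  unfolding max_comp_size_def by (intro Max_ge) (auto simp: graph_def)

lemma card_Int_Un_disjoint:
  "finite A \<Longrightarrow> X \<inter> Y = {} \<Longrightarrow> card (A \<inter> (X \<union> Y)) = card (A \<inter> X) + card (A \<inter> Y)"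
  by (subst card_Un_disjoint[symmetric]) (auto simp: Int_Un_distrib)

lemma exists_component_card_Int_less:
  assumes "graph V E" "finite S" "finite J"
    and "edge_closed V E X" "card (J \<inter> X) < card (S \<inter> X)"
  shows "\<exists>v\<in>X. card (J \<inter> component V E v) < card (S \<inter> component V E v)"
  using assms(4,5)
proof (induction "card X" arbitrary: X rule: less_induct)
  case less
  obtain v where v: "v \<in> X"
    using less.prems(2) by (metis card.empty disjoint_iff less_nat_zero_code)
  let ?C = "component V E v"
  show ?case
  proof (cases "card (J \<inter> ?C) < card (S \<inter> ?C)")
    case True
    then show ?thesis using v by blast
  next
    case False
    have CX: "?C \<subseteq> X" using component_subset_edge_closed[OF less.prems(1) v] .
    have "finite X"
      using less.prems(1) assms(1) finite_subset by (auto simp: edge_closed_def graph_def)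
    moreover have "v \<in> ?C" using v less.prems(1) by (auto simp: component_def edge_closed_def)
    ultimately have smaller: "card (X - ?C) < card X" using CX by (intro psubset_card_mono) auto
    have closed: "edge_closed V E (X - ?C)"
      using edge_closed_Diff[OF assms(1) less.prems(1) component_edge_closed[OF assms(1)]] .
    have "X = ?C \<union> (X - ?C)" using CX by blast
    then have "card (J \<inter> (X - ?C)) < card (S \<inter> (X - ?C))"
      using False less.prems(2) card_Int_Un_disjoint[OF assms(2), of ?C "X - ?C"]
        card_Int_Un_disjoint[OF assms(3), of ?C "X - ?C"] by auto
    then show ?thesis using less.hyps[OF smaller closed] by blast
  qed
qed

lemma exists_edge_closed_surplus:
  assumes "graph V E" "S \<subseteq> V" "J \<subseteq> V" "k + card J \<le> card S"
  shows "\<exists>W. edge_closed V E W \<and> card W \<le> k * max_comp_size V E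
           \<and> k + card (J \<inter> W) \<le> card (S \<inter> W)"
  using assms(4)
proof (induction k)
  case 0
  show ?case using edge_closed_empty by fastforce
next
  case (Suc k)
  have finV: "finite V" using assms(1) by (simp add: graph_def)
  have finS: "finite S" and finJ: "finite J" using assms finV finite_subset by blast+
  from Suc obtain W where W: "edge_closed V E W" "card W \<le> k * max_comp_size V E"
      "k + card (J \<inter> W) \<le> card (S \<inter> W)"
    by auto
  show ?case
  proof (cases "Suc k + card (J \<inter> W) \<le> card (S \<inter> W)")
    case True
    then show ?thesis using W by (intro exI[of _ W]) auto
  next
    case False
    let ?X = "V - W"
    have closed_X: "edge_closed V E ?X" using edge_closed_compl[OF assms(1) W(1)] .
    have restrict: "S \<inter> ?X = S - W" "J \<inter> ?X = J - W" using assms(2,3) by blast+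
    have "card (J \<inter> ?X) < card (S \<inter> ?X)"
      unfolding restrict
      using False Suc.prems card_Int_Diff[OF finS, of W] card_Int_Diff[OF finJ, of W] by linarith
    then obtain v where v: "v \<in> ?X"
        "card (J \<inter> component V E v) < card (S \<inter> component V E v)"
      using exists_component_card_Int_less[OF assms(1) finS finJ closed_X] by blast
    let ?C = "component V E v"
    have disjoint: "W \<inter> ?C = {}" using component_subset_edge_closed[OF closed_X v(1)] by blast
    have "card (W \<union> ?C) \<le> card W + card ?C" by (rule card_Un_le)
    also have "\<dots> \<le> k * max_comp_size V E + max_comp_size V E"
      using W(2) card_component_le_max_comp_size[OF assms(1)] v(1) by (intro add_mono) auto
    also have "\<dots> = Suc k * max_comp_size V E" by simp
    finally show ?thesis
      using edge_closed_Un[OF W(1) component_edge_closed[OF assms(1)]] W(3) v(2)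
        card_Int_Un_disjoint[OF finS disjoint] card_Int_Un_disjoint[OF finJ disjoint]
      by (intro exI[of _ "W \<union> ?C"]) auto
  qed
qed

lemma nbhd_cover_subset:
  assumes "finite A" "A \<subseteq> nbhd E I"
  obtains I1 where "I1 \<subseteq> I" "card I1 \<le> card A" "A \<subseteq> nbhd E I1"
proof -
  have "\<forall>a\<in>A. \<exists>x. x \<in> I \<and> E x a" using assms(2) by (auto simp: nbhd_def)
  then obtain f where f: "\<forall>a\<in>A. f a \<in> I \<and> E (f a) a" by (auto dest: bchoice)
  show ?thesis
  proof
    show "f ` A \<subseteq> I" "A \<subseteq> nbhd E (f ` A)" using f by (auto simp: nbhd_def)
    show "card (f ` A) \<le> card A" using card_image_le[OF assms(1)] .
  qed
qed

lemma nbhd_mono: "I1 \<subseteq> I \<Longrightarrow> nbhd E I1 \<subseteq> nbhd E I"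
  by (auto simp: nbhd_def)

lemma exists_maximal_indep_agreeing_inside:
  assumes "graph V E" "edge_closed V E W"
    and J: "maximal_indep (del_verts_V V N) (del_verts_E E N) J"
    and "N' \<subseteq> N" "W \<inter> N \<subseteq> N'"
  shows "\<exists>T. maximal_indep (del_verts_V V N') (del_verts_E E N') T \<and> T \<inter> W = J \<inter> W"
proof -
  have "indep (del_verts_V V N') (del_verts_E E N') (J \<inter> W)"
    using maximal_indep_imp_indep[OF J] assms(4)
    unfolding indep_def del_verts_V_def del_verts_E_def by blast
  moreover have "finite (del_verts_V V N')" using assms(1) by (simp add: graph_def del_verts_V_def)
  ultimately obtain T where T: "maximal_indep (del_verts_V V N') (del_verts_E E N') T" "J \<inter> W \<subseteq> T"
    using maximal_indep_extend by blast
  have T_indep: "indep (del_verts_V V N') (del_verts_E E N') T"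
    using maximal_indep_imp_indep[OF T(1)] .
  have "t \<in> J" if t: "t \<in> T" "t \<in> W" for t
  proof (rule ccontr)
    assume "t \<notin> J"
    moreover have "t \<in> del_verts_V V N"
      using t T_indep assms(5) unfolding indep_def del_verts_V_def by blast
    moreover have "\<not> del_verts_E E N t t" using assms(1) by (simp add: graph_def del_verts_E_def)
    ultimately obtain j where j: "j \<in> J" "del_verts_E E N t j \<or> del_verts_E E N j t"
      using maximal_indep_dominates[OF J] by blast
    then have "E t j" using assms(1) unfolding graph_def del_verts_E_def by blast
    moreover have "j \<in> T" using T(2) j(1) \<open>E t j\<close> t(2) assms(2) by (auto simp: edge_closed_def)
    ultimately show False
      using t(1) T_indep unfolding indep_def del_verts_V_def del_verts_E_def by blast
  qed
  then show ?thesis using T by blast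
qed

lemma indep_patch:
  assumes "graph V E" "edge_closed V E W" "indep V E S" "indep V E T"
  shows "indep V E ((S \<inter> W) \<union> (T - W))"
  using assms unfolding indep_def edge_closed_def graph_def by blast

lemma indep_dom_del_verts_le:
  assumes "graph V E" "edge_closed V E W" "indep V E S"
    and "maximal_indep (del_verts_V V N) (del_verts_E E N) J"
    and "N' \<subseteq> N" "W \<inter> N \<subseteq> N'"
  shows "indep_dom (del_verts_V V N') (del_verts_E E N') + card (S \<inter> W)
           \<le> alpha V E + card (J \<inter> W)"
proof -
  have finV: "finite V" using assms(1) by (simp add: graph_def)
  obtain T where T: "maximal_indep (del_verts_V V N') (del_verts_E E N') T" "T \<inter> W = J \<inter> W"
    using exists_maximal_indep_agreeing_inside[OF assms(1,2,4-6)] by blast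
  have T_indep: "indep V E T"
    using maximal_indep_imp_indep[OF T(1)] by (auto simp: indep_def del_verts_V_def del_verts_E_def)
  have finS: "finite S" and finT: "finite T"
    using assms(3) T_indep finV finite_subset by (auto simp: indep_def)
  have "indep_dom (del_verts_V V N') (del_verts_E E N') \<le> card (T \<inter> W) + card (T - W)"
    using indep_dom_le_card[OF _ T(1)] card_Int_Diff[OF finT] finV by (simp add: del_verts_V_def)
  moreover have "card (S \<inter> W) + card (T - W) = card ((S \<inter> W) \<union> (T - W))"
    using finS finT by (intro card_Un_disjoint[symmetric]) auto
  moreover have "\<dots> \<le> alpha V E"
    using card_le_alpha[OF finV indep_patch[OF assms(1-3) T_indep]] .
  moreover have "card (T \<inter> W) = card (J \<inter> W)" using T(2) by simp
  ultimately show ?thesis by linarith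
qed

theorem lemma8:
  fixes V VH :: "'a set" and E EH :: "'a \<Rightarrow> 'a \<Rightarrow> bool" and I :: "'a set" and k :: nat
  assumes "graph V E"
    and "subgraph VH EH V E"
    and "VH \<noteq> {}"
    and "indep V E I" and "I \<subseteq> V - VH"
    and "int k \<le> int (alpha VH EH)
           - int (indep_dom (del_verts_V VH (nbhd E I)) (del_verts_E EH (nbhd E I)))"
  shows "\<exists>I1 \<subseteq> I. card I1 \<le> k * max_comp_size VH EH
           \<and> int k \<le> int (alpha VH EH)
              - int (indep_dom (del_verts_V VH (nbhd E I1)) (del_verts_E EH (nbhd E I1)))"
proof -
  let ?N = "nbhd E I"
  have H: "graph VH EH" using assms(2) by (simp add: subgraph_def)
  then have finVH: "finite VH" by (simp add: graph_def)
  obtain S where S: "indep VH EH S" "card S = alpha VH EH"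
    using alpha_attained[OF finVH] by blast
  obtain J where J: "maximal_indep (del_verts_V VH ?N) (del_verts_E EH ?N) J"
      "card J = indep_dom (del_verts_V VH ?N) (del_verts_E EH ?N)"
    using indep_dom_attained[of "del_verts_V VH ?N"] finVH by (auto simp: del_verts_V_def)
  have "S \<subseteq> VH" "J \<subseteq> VH"
    using S(1) maximal_indep_imp_indep[OF J(1)] by (auto simp: indep_def del_verts_V_def)
  moreover have "k + card J \<le> card S" using assms(6) J(2) S(2) by linarith
  ultimately obtain W where W: "edge_closed VH EH W" "card W \<le> k * max_comp_size VH EH"
      "k + card (J \<inter> W) \<le> card (S \<inter> W)"
    using exists_edge_closed_surplus[OF H] by blast
  have finW: "finite W"
    using W(1) finVH unfolding edge_closed_def by (blast intro: finite_subset)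
  then have "finite (W \<inter> ?N)" by simp
  then obtain I1 where I1: "I1 \<subseteq> I" "card I1 \<le> card (W \<inter> ?N)" "W \<inter> ?N \<subseteq> nbhd E I1"
    using nbhd_cover_subset[OF _ Int_lower2] by blast
  have "card (W \<inter> ?N) \<le> card W" using finW by (simp add: card_mono)
  then have "card I1 \<le> k * max_comp_size VH EH" using I1(2) W(2) by linarith
  moreover
  have "indep_dom (del_verts_V VH (nbhd E I1)) (del_verts_E EH (nbhd E I1))
      + card (S \<inter> W) \<le> alpha VH EH + card (J \<inter> W)"
    using indep_dom_del_verts_le[OF H W(1) S(1) J(1) nbhd_mono[OF I1(1)] I1(3)] .
  then have "k + indep_dom (del_verts_V VH (nbhd E I1)) (del_verts_E EH (nbhd E I1))
      \<le> alpha VH EH"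
    using W(3) by linarith
  ultimately show ?thesis using I1(1) by (intro exI[of _ I1]) simp
qed

end
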